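(* Let $X$ be a locally convex Hausdorff space, $K\subset X$ a convex compact subset, $T:\mathscr{C}(K)\to\mathscr{C}(K)$ a Markov operator such that $T(h)=h$ for every $h\in A(K)$, $a\ge0$, and $(\mu_n)_{n\ge1}$ a sequence of Borel probability measures on $K$. Then for every $f\in\mathscr{C}(K)$, $C_n(f)\to f$ uniformly on $K$ as $n\to\infty$, where $C_n$ is defined in the context.
   Context: $\mathscr{C}(K)$ is the space of real continuous functions on $K$; $A(K)$ is the space of continuous affine functions on $K$. A Markov operator is a positive linear operator $T$ on $\mathscr{C}(K)$ with $T(\mathbf{1})=\mathbf{1}$; $(\tilde\mu_x^T)_{x\in K}$ are the Borel probability measures with $\int_K f\,d\tilde\mu_x^T=T(f)(x)$. For $n\ge1$, $$C_n(f)(x)=\int_K\cdots\int_K f\Big(\frac{x_1+\dots+x_n+a x_{n+1}}{n+a}\Big)\,d\tilde\mu_x^T(x_1)\cdots d\tilde\mu_x^T(x_n)\,d\mu_n(x_{n+1})\quad(f\in\mathscr{C}(K),x\in K).$$ *)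

theory Defs
  imports "HOL-Probability.Probability"
begin

text \<open>A (real) locally convex Hausdorff topological vector space structure on the type 'a:
  the Hausdorff property is the type class t2_space; vector operations are continuous
  and every point has a base of convex open neighbourhoods.\<close>
definition locally_convex_tvs :: "'a::{real_vector,t2_space} itself \<Rightarrow> bool" where
  "locally_convex_tvs (t::'a itself) \<longleftrightarrow>
     continuous_on UNIV (\<lambda>(x::'a, y). x + y) \<and>
     continuous_on UNIV (\<lambda>(c::real, x::'a). c *\<^sub>R x) \<and>
     (\<forall>(U::'a set) x. open U \<and> x \<in> U \<longrightarrow> (\<exists>V. open V \<and> convex V \<and> x \<in> V \<and> V \<subseteq> U))"

text \<open>Affine functions on a convex set K (elements of A(K) when also continuous on K).\<close>
definition affine_on :: "'a::real_vector set \<Rightarrow> ('a \<Rightarrow> real) \<Rightarrow> bool" where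
  "affine_on K h \<longleftrightarrow> (\<forall>x\<in>K. \<forall>y\<in>K. \<forall>t::real. 0 \<le> t \<and> t \<le> 1 \<longrightarrow>
      h ((1 - t) *\<^sub>R x + t *\<^sub>R y) = (1 - t) * h x + t * h y)"

text \<open>Markov operator on C(K): positive linear operator mapping C(K) into C(K) with T 1 = 1.
  Functions are represented on the whole type; only their values on K matter.\<close>
definition markov_operator :: "'a::topological_space set \<Rightarrow> (('a \<Rightarrow> real) \<Rightarrow> ('a \<Rightarrow> real)) \<Rightarrow> bool" where
  "markov_operator K T \<longleftrightarrow>
     (\<forall>f. continuous_on K f \<longrightarrow> continuous_on K (T f)) \<and>
     (\<forall>f g. continuous_on K f \<longrightarrow> continuous_on K g \<longrightarrow>
        (\<forall>x\<in>K. T (\<lambda>y. f y + g y) x = T f x + T g x)) \<and>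
     (\<forall>f c. continuous_on K f \<longrightarrow> (\<forall>x\<in>K. T (\<lambda>y. c * f y) x = c * T f x)) \<and>
     (\<forall>f. continuous_on K f \<longrightarrow> (\<forall>x\<in>K. 0 \<le> f x) \<longrightarrow> (\<forall>x\<in>K. 0 \<le> T f x)) \<and>
     (\<forall>x\<in>K. T (\<lambda>_. 1) x = 1)"

definition borel_prob_on :: "'a::topological_space set \<Rightarrow> 'a measure \<Rightarrow> bool" where
  "borel_prob_on K M \<longleftrightarrow> prob_space M \<and> sets M = sets (restrict_space borel K)"

text \<open>Iterated integral: iter_int k M g xs = \<integral>...\<integral> g (y_k # ... # y_1 # xs) dM(y_1)...dM(y_k),
  the innermost integral being over the variable added last.\<close>
fun iter_int :: "nat \<Rightarrow> 'a measure \<Rightarrow> ('a list \<Rightarrow> real) \<Rightarrow> 'a list \<Rightarrow> real" where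
  "iter_int 0 M g xs = g xs"
| "iter_int (Suc k) M g xs = (\<integral>y. iter_int k M g (y # xs) \<partial>M)"

definition C_op :: "('a \<Rightarrow> 'a measure) \<Rightarrow> (nat \<Rightarrow> 'a measure) \<Rightarrow> real \<Rightarrow> nat
    \<Rightarrow> ('a::real_vector \<Rightarrow> real) \<Rightarrow> 'a \<Rightarrow> real" where
  "C_op mu mus a n f x =
     (\<integral>z. iter_int n (mu x)
             (\<lambda>xs. f (inverse (real n + a) *\<^sub>R (sum_list xs + a *\<^sub>R z))) [] \<partial>(mus n))"

end

theory Submission
  imports Defs
begin

text \<open>C_n f x is the expectation of f at the convex combination, with weights 1/(n+a) and a/(n+a),
  of n points drawn from mu x and one point drawn from mu_n. Since T fixes the continuous affine
  functions, mu x has barycenter x, so for every continuous linear functional l the mean square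
  deviation of l from l x under this combination is O(1/n). Continuous linear functionals separate
  the points of X (Hahn--Banach), hence by compactness
  |f y - f x| \<le> e + C * (sum over i of (l_i y - l_i x)^2) on K for finitely many l_i, and applying
  the positive unital operator C_n gives |C_n f x - f x| \<le> e + O(1/n) uniformly in x.\<close>

section \<open>Hahn--Banach via maximal dominated linear graphs\<close>

definition dominated_linear_graph :: "('a::real_vector \<Rightarrow> real) \<Rightarrow> ('a \<times> real) set \<Rightarrow> bool" where
  "dominated_linear_graph p G \<longleftrightarrow> (0, 0) \<in> G
     \<and> (\<forall>x r y s. (x, r) \<in> G \<longrightarrow> (y, s) \<in> G \<longrightarrow> (x + y, r + s) \<in> G)
     \<and> (\<forall>x r c. (x, r) \<in> G \<longrightarrow> (c *\<^sub>R x, c * r) \<in> G)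
     \<and> (\<forall>x r s. (x, r) \<in> G \<longrightarrow> (x, s) \<in> G \<longrightarrow> r = s)
     \<and> (\<forall>x r. (x, r) \<in> G \<longrightarrow> r \<le> p x)"

lemma
  assumes "dominated_linear_graph p G"
  shows dominated_linear_graph_zero: "(0, 0) \<in> G"
    and dominated_linear_graph_add: "(x, r) \<in> G \<Longrightarrow> (y, s) \<in> G \<Longrightarrow> (x + y, r + s) \<in> G"
    and dominated_linear_graph_scaleR: "(x, r) \<in> G \<Longrightarrow> (c *\<^sub>R x, c * r) \<in> G"
    and dominated_linear_graph_unique: "(x, r) \<in> G \<Longrightarrow> (x, s) \<in> G \<Longrightarrow> r = s"
    and dominated_linear_graph_le: "(x, r) \<in> G \<Longrightarrow> r \<le> p x"
  using assms unfolding dominated_linear_graph_def by blast+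

lemma dominated_linear_graph_Union_chain:
  assumes chain: "subset.chain {G. dominated_linear_graph p G} C" and "C \<noteq> {}"
  shows "dominated_linear_graph p (\<Union>C)"
proof -
  have G: "dominated_linear_graph p G" if "G \<in> C" for G
    using chain that by (auto simp: subset_chain_def)
  have common: "\<exists>G\<in>C. u \<in> G \<and> v \<in> G" if "u \<in> \<Union>C" "v \<in> \<Union>C" for u v
    using chain that unfolding subset_chain_def by blast
  show ?thesis
    unfolding dominated_linear_graph_def
  proof (intro conjI allI impI)
    show "(0, 0) \<in> \<Union>C"
      using \<open>C \<noteq> {}\<close> G dominated_linear_graph_zero by blast
    show "(x + y, r + s) \<in> \<Union>C" if "(x, r) \<in> \<Union>C" "(y, s) \<in> \<Union>C" for x r y s
      using common[OF that] G dominated_linear_graph_add by blast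
    show "(c *\<^sub>R x, c * r) \<in> \<Union>C" if "(x, r) \<in> \<Union>C" for x r c
      using that G dominated_linear_graph_scaleR by blast
    show "r = s" if "(x, r) \<in> \<Union>C" "(x, s) \<in> \<Union>C" for x r s
      using common[OF that] G dominated_linear_graph_unique by blast
    show "r \<le> p x" if "(x, r) \<in> \<Union>C" for x r
      using that G dominated_linear_graph_le by blast
  qed
qed

lemma maximal_dominated_linear_graph_exists:
  assumes "dominated_linear_graph p B"
  obtains G where "dominated_linear_graph p G" "B \<subseteq> G"
    "\<And>X. dominated_linear_graph p X \<Longrightarrow> G \<subseteq> X \<Longrightarrow> X = G"
proof -
  define \<A> where "\<A> = {G. dominated_linear_graph p G \<and> B \<subseteq> G}"
  have "\<exists>M\<in>\<A>. \<forall>X\<in>\<A>. M \<subseteq> X \<longrightarrow> X = M"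
  proof (rule subset_Zorn_nonempty)
    show "\<A> \<noteq> {}" using assms by (auto simp: \<A>_def)
    fix C assume "C \<noteq> {}" "subset.chain \<A> C"
    then have "subset.chain {G. dominated_linear_graph p G} C" "\<forall>G\<in>C. B \<subseteq> G"
      by (auto simp: subset_chain_def \<A>_def)
    then show "\<Union>C \<in> \<A>"
      using \<open>C \<noteq> {}\<close> dominated_linear_graph_Union_chain by (auto simp: \<A>_def)
  qed
  then obtain G where "G \<in> \<A>" and max: "\<And>X. X \<in> \<A> \<Longrightarrow> G \<subseteq> X \<Longrightarrow> X = G"
    by blast
  show ?thesis
  proof (rule that)
    show "dominated_linear_graph p G" "B \<subseteq> G"
      using \<open>G \<in> \<A>\<close> by (simp_all add: \<A>_def)
    show "X = G" if "dominated_linear_graph p X" "G \<subseteq> X" for X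
      using that \<open>G \<in> \<A>\<close> by (intro max) (auto simp: \<A>_def)
  qed
qed

lemma dominated_linear_graph_functional:
  assumes G: "dominated_linear_graph p G" and total: "\<And>v. \<exists>r. (v, r) \<in> G"
  obtains l where "linear l" "\<And>v. (v, l v) \<in> G" "\<And>v. l v \<le> p v"
proof
  define l where "l v = (THE r. (v, r) \<in> G)" for v
  have l_eq: "l v = r" if "(v, r) \<in> G" for v r
    unfolding l_def
    by (rule the_equality[where P="\<lambda>r. (v, r) \<in> G", OF that dominated_linear_graph_unique[OF G _ that]])
  show l_graph: "(v, l v) \<in> G" for v
    using total[of v] l_eq by blast
  show "linear l"
  proof (rule linearI)
    show "l (x + y) = l x + l y" for x y
      by (intro l_eq dominated_linear_graph_add[OF G] l_graph)
    show "l (c *\<^sub>R x) = c *\<^sub>R l x" for c x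
      using l_eq[OF dominated_linear_graph_scaleR[OF G l_graph]] by simp
  qed
  show "l v \<le> p v" for v
    using dominated_linear_graph_le[OF G l_graph] .
qed

definition graph_extension :: "('a::real_vector \<times> real) set \<Rightarrow> 'a \<Rightarrow> real \<Rightarrow> ('a \<times> real) set" where
  "graph_extension G z c = {(x + t *\<^sub>R z, r + t * c) | x r t. (x, r) \<in> G}"

lemma subset_graph_extension: "G \<subseteq> graph_extension G z c"
  unfolding graph_extension_def by (force intro: exI[of _ 0])

lemma mem_graph_extension: "(0, 0) \<in> G \<Longrightarrow> (z, c) \<in> graph_extension G z c"
  unfolding graph_extension_def by (force intro: exI[of _ 1])

locale sublinear =
  fixes p :: "'a::real_vector \<Rightarrow> real"
  assumes add_le: "p (x + y) \<le> p x + p y"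
    and scaleR_pos: "0 < c \<Longrightarrow> p (c *\<^sub>R x) = c * p x"
begin

lemma zero: "p 0 = 0"
  using scaleR_pos[of 2 0] by simp

lemma minus_ge: "- p x \<le> p (- x)"
  using add_le[of x "- x"] zero by simp

lemma scaleR_ge: "c * p x \<le> p (c *\<^sub>R x)"
proof (cases "0 < c")
  case False
  have "c * p x = (- c) * (- p x)" by simp
  also have "\<dots> \<le> (- c) * p (- x)"
    using False minus_ge[of x] by (intro mult_left_mono) auto
  also have "\<dots> = p (c *\<^sub>R x)"
    using False zero scaleR_pos[of "- c" "- x"] by (cases "c = 0") auto
  finally show ?thesis .
qed (simp add: scaleR_pos)

lemma dominated_linear_graph_line: "dominated_linear_graph p (range (\<lambda>t. (t *\<^sub>R d, t * p d)))"
  unfolding dominated_linear_graph_def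
proof (intro conjI allI impI)
  show "(0, 0) \<in> range (\<lambda>t. (t *\<^sub>R d, t * p d))"
    by (rule range_eqI[of _ _ 0]) simp
  show "(x + y, r + s) \<in> range (\<lambda>t. (t *\<^sub>R d, t * p d))"
    if "(x, r) \<in> range (\<lambda>t. (t *\<^sub>R d, t * p d))" "(y, s) \<in> range (\<lambda>t. (t *\<^sub>R d, t * p d))" for x r y s
  proof -
    from that obtain t1 t2 where "x = t1 *\<^sub>R d" "r = t1 * p d" "y = t2 *\<^sub>R d" "s = t2 * p d"
      by auto
    then show ?thesis
      by (intro range_eqI[of _ _ "t1 + t2"]) (simp add: scaleR_add_left distrib_right)
  qed
  show "(c *\<^sub>R x, c * r) \<in> range (\<lambda>t. (t *\<^sub>R d, t * p d))"
    if "(x, r) \<in> range (\<lambda>t. (t *\<^sub>R d, t * p d))" for x r c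
  proof -
    from that obtain t where "x = t *\<^sub>R d" "r = t * p d"
      by auto
    then show ?thesis
      by (intro range_eqI[of _ _ "c * t"]) simp
  qed
  show "r = s" if "(x, r) \<in> range (\<lambda>t. (t *\<^sub>R d, t * p d))" "(x, s) \<in> range (\<lambda>t. (t *\<^sub>R d, t * p d))"
    for x r s
    using that zero by (cases "d = 0") auto
  show "r \<le> p x" if "(x, r) \<in> range (\<lambda>t. (t *\<^sub>R d, t * p d))" for x r
    using that scaleR_ge by auto
qed

text \<open>The value c of the extension at z must be squeezed between these two families of bounds;
  they are compatible by subadditivity of p.\<close>
lemma extension_value_exists:
  assumes G: "dominated_linear_graph p G"
  obtains c where "\<And>y s. (y, s) \<in> G \<Longrightarrow> s - p (y - z) \<le> c"
    and "\<And>x r. (x, r) \<in> G \<Longrightarrow> c \<le> p (x + z) - r"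
proof
  have sep: "s - p (y - z) \<le> p (x + z) - r" if "(x, r) \<in> G" "(y, s) \<in> G" for x r y s
  proof -
    have "r + s \<le> p ((x + z) + (y - z))"
      using that dominated_linear_graph_add[OF G] dominated_linear_graph_le[OF G] by simp
    also have "\<dots> \<le> p (x + z) + p (y - z)" by (rule add_le)
    finally show ?thesis by simp
  qed
  define S where "S = {s - p (y - z) | y s. (y, s) \<in> G}"
  have "S \<noteq> {}" and "bdd_above S"
    using dominated_linear_graph_zero[OF G] sep unfolding S_def bdd_above_def by blast+
  then show "s - p (y - z) \<le> Sup S" if "(y, s) \<in> G" for y s
    using that by (intro cSup_upper) (auto simp: S_def)
  show "Sup S \<le> p (x + z) - r" if "(x, r) \<in> G" for x r
    using \<open>S \<noteq> {}\<close> sep[OF that] by (intro cSup_least) (auto simp: S_def)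
qed

lemma graph_extension_le:
  assumes G: "dominated_linear_graph p G"
    and c_lower: "\<And>y s. (y, s) \<in> G \<Longrightarrow> s - p (y - z) \<le> c"
    and c_upper: "\<And>x r. (x, r) \<in> G \<Longrightarrow> c \<le> p (x + z) - r"
    and "(x, r) \<in> graph_extension G z c"
  shows "r \<le> p x"
proof -
  obtain x1 r1 t where g: "(x1, r1) \<in> G" "x = x1 + t *\<^sub>R z" "r = r1 + t * c"
    using assms(4) unfolding graph_extension_def by blast
  note scale = dominated_linear_graph_scaleR[OF G g(1)]
  consider "t = 0" | "t > 0" | "t < 0" by linarith
  then show ?thesis
  proof cases
    case 1
    then show ?thesis using g dominated_linear_graph_le[OF G] by simp
  next
    case 2
    have "t * c \<le> t * (p (inverse t *\<^sub>R x1 + z) - inverse t * r1)"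
      using 2 c_upper[OF scale[of "inverse t"]] by (intro mult_left_mono) auto
    also have "\<dots> = p (t *\<^sub>R (inverse t *\<^sub>R x1 + z)) - r1"
      using 2 by (simp add: scaleR_pos right_diff_distrib)
    finally show ?thesis using 2 g by (simp add: scaleR_add_right)
  next
    case 3
    define u where "u = - t"
    have u: "0 < u" "x = x1 - u *\<^sub>R z" "r = r1 - u * c"
      using 3 g unfolding u_def by auto
    have "u * (inverse u * r1 - p (inverse u *\<^sub>R x1 - z)) \<le> u * c"
      using u c_lower[OF scale[of "inverse u"]] by (intro mult_left_mono) auto
    moreover have "u * (inverse u * r1 - p (inverse u *\<^sub>R x1 - z))
        = r1 - p (u *\<^sub>R (inverse u *\<^sub>R x1 - z))"
      using u by (simp only: scaleR_pos right_diff_distrib) simp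
    ultimately show ?thesis using u by (simp add: scaleR_diff_right)
  qed
qed

lemma dominated_linear_graph_extension:
  assumes G: "dominated_linear_graph p G" and z: "\<And>r. (z, r) \<notin> G"
    and c_lower: "\<And>y s. (y, s) \<in> G \<Longrightarrow> s - p (y - z) \<le> c"
    and c_upper: "\<And>x r. (x, r) \<in> G \<Longrightarrow> c \<le> p (x + z) - r"
  shows "dominated_linear_graph p (graph_extension G z c)"
  unfolding dominated_linear_graph_def
proof (intro conjI allI impI)
  note Gadd = dominated_linear_graph_add[OF G] and Gscale = dominated_linear_graph_scaleR[OF G]
  show "(0, 0) \<in> graph_extension G z c"
    using subset_graph_extension dominated_linear_graph_zero[OF G] by blast
  show "(x + y, r + s) \<in> graph_extension G z c"
    if mem: "(x, r) \<in> graph_extension G z c" "(y, s) \<in> graph_extension G z c" for x r y s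
  proof -
    obtain x1 r1 t1 x2 r2 t2 where "(x1, r1) \<in> G" "(x2, r2) \<in> G"
      "x = x1 + t1 *\<^sub>R z" "r = r1 + t1 * c" "y = x2 + t2 *\<^sub>R z" "s = r2 + t2 * c"
      using mem unfolding graph_extension_def by blast
    then have "(x + y, r + s) = ((x1 + x2) + (t1 + t2) *\<^sub>R z, (r1 + r2) + (t1 + t2) * c)"
      and "(x1 + x2, r1 + r2) \<in> G"
      using Gadd by (auto simp: algebra_simps)
    then show ?thesis unfolding graph_extension_def by blast
  qed
  show "(k *\<^sub>R x, k * r) \<in> graph_extension G z c" if mem: "(x, r) \<in> graph_extension G z c" for x r k
  proof -
    obtain x1 r1 t where g: "(x1, r1) \<in> G" "x = x1 + t *\<^sub>R z" "r = r1 + t * c"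
      using mem unfolding graph_extension_def by blast
    then have "(k *\<^sub>R x, k * r) = (k *\<^sub>R x1 + (k * t) *\<^sub>R z, k * r1 + (k * t) * c)"
      by (simp add: algebra_simps)
    with Gscale[OF g(1)] show ?thesis unfolding graph_extension_def by blast
  qed
  show "r = s" if mem: "(x, r) \<in> graph_extension G z c" "(x, s) \<in> graph_extension G z c" for x r s
  proof -
    obtain x1 r1 t1 x2 r2 t2 where g: "(x1, r1) \<in> G" "(x2, r2) \<in> G"
      "x = x1 + t1 *\<^sub>R z" "r = r1 + t1 * c" "x = x2 + t2 *\<^sub>R z" "s = r2 + t2 * c"
      using mem unfolding graph_extension_def by blast
    have diff: "(x1 - x2, r1 - r2) \<in> G"
      using Gadd[OF g(1) Gscale[OF g(2), of "-1"]] by simp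
    have "t1 = t2"
    proof (rule ccontr)
      assume "t1 \<noteq> t2"
      moreover have "x1 - x2 = (t2 - t1) *\<^sub>R z"
        using g by (simp add: algebra_simps)
      ultimately have "z = inverse (t2 - t1) *\<^sub>R (x1 - x2)"
        by simp
      then show False
        using z Gscale[OF diff] by metis
    qed
    then show "r = s"
      using g dominated_linear_graph_unique[OF G] by auto
  qed
  show "r \<le> p x" if "(x, r) \<in> graph_extension G z c" for x r
    using graph_extension_le[OF G c_lower c_upper that] .
qed

lemma maximal_dominated_linear_graph_total:
  assumes G: "dominated_linear_graph p G"
    and max: "\<And>X. dominated_linear_graph p X \<Longrightarrow> G \<subseteq> X \<Longrightarrow> X = G"
  shows "\<exists>r. (z, r) \<in> G"
proof (rule ccontr)
  assume "\<nexists>r. (z, r) \<in> G"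
  then have z: "(z, r) \<notin> G" for r by blast
  obtain c where "\<And>y s. (y, s) \<in> G \<Longrightarrow> s - p (y - z) \<le> c"
    and "\<And>x r. (x, r) \<in> G \<Longrightarrow> c \<le> p (x + z) - r"
    using extension_value_exists[OF G] by blast
  from dominated_linear_graph_extension[OF G z this] have "graph_extension G z c = G"
    using subset_graph_extension by (rule max)
  then show False
    using z mem_graph_extension[OF dominated_linear_graph_zero[OF G]] by metis
qed

text \<open>Zorn's lemma applied to the dominated linear graphs containing the line through d.\<close>
theorem hahn_banach_attaining: "\<exists>l. linear l \<and> (\<forall>v. l v \<le> p v) \<and> l d = p d"
proof -
  obtain G where G: "dominated_linear_graph p G" and line: "range (\<lambda>t. (t *\<^sub>R d, t * p d)) \<subseteq> G"
    and max: "\<And>X. dominated_linear_graph p X \<Longrightarrow> G \<subseteq> X \<Longrightarrow> X = G"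
    using maximal_dominated_linear_graph_exists[OF dominated_linear_graph_line] by blast
  obtain l where l: "linear l" "\<And>v. (v, l v) \<in> G" "\<And>v. l v \<le> p v"
    using dominated_linear_graph_functional[OF G maximal_dominated_linear_graph_total[OF G max]]
    by blast
  have "(d, p d) \<in> G"
    using line rangeI[of "\<lambda>t. (t *\<^sub>R d, t * p d)" 1] by auto
  then have "l d = p d"
    using dominated_linear_graph_unique[OF G l(2)] by blast
  with l show ?thesis by blast
qed

end

section \<open>Separating points in locally convex spaces\<close>

definition minkowski_functional :: "'a::real_vector set \<Rightarrow> 'a \<Rightarrow> real" where
  "minkowski_functional V v = Inf {t. 0 < t \<and> inverse t *\<^sub>R v \<in> V}"

locale convex_absorbing =
  fixes V :: "'a::real_vector set"
  assumes convex: "convex V" and zero: "0 \<in> V"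
    and absorbing: "\<And>v. \<exists>t>0. inverse t *\<^sub>R v \<in> V"
begin

lemma scales_nonempty: "{t. 0 < t \<and> inverse t *\<^sub>R v \<in> V} \<noteq> {}"
  using absorbing[of v] by auto

lemma scales_bdd_below: "bdd_below {t. 0 < t \<and> inverse t *\<^sub>R v \<in> V}"
  by (rule bdd_belowI[where m=0]) auto

lemma minkowski_functional_le: "0 < t \<Longrightarrow> inverse t *\<^sub>R v \<in> V \<Longrightarrow> minkowski_functional V v \<le> t"
  unfolding minkowski_functional_def using scales_bdd_below by (intro cInf_lower) auto

lemma minkowski_functional_le_one: "v \<in> V \<Longrightarrow> minkowski_functional V v \<le> 1"
  using minkowski_functional_le[of 1] by simp

lemma mem_if_minkowski_functional_less_one:
  assumes "minkowski_functional V v < 1" shows "v \<in> V"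
proof -
  from assms obtain t where t: "0 < t" "inverse t *\<^sub>R v \<in> V" "t < 1"
    unfolding minkowski_functional_def using cInf_less_iff[OF scales_nonempty scales_bdd_below] by auto
  have "t *\<^sub>R (inverse t *\<^sub>R v) + (1 - t) *\<^sub>R 0 \<in> V"
    using t zero by (intro convexD[OF convex]) auto
  then show ?thesis using t by simp
qed

lemma minkowski_functional_add: "minkowski_functional V (v + w) \<le> minkowski_functional V v + minkowski_functional V w"
proof -
  have sum: "minkowski_functional V (v + w) \<le> s + t"
    if s: "0 < s" "inverse s *\<^sub>R v \<in> V" and t: "0 < t" "inverse t *\<^sub>R w \<in> V" for s t
  proof (rule minkowski_functional_le)
    have "(s / (s + t)) *\<^sub>R (inverse s *\<^sub>R v) + (t / (s + t)) *\<^sub>R (inverse t *\<^sub>R w) \<in> V"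
      using s t by (intro convexD[OF convex]) (auto simp: add_divide_distrib[symmetric])
    also have "(s / (s + t)) *\<^sub>R (inverse s *\<^sub>R v) + (t / (s + t)) *\<^sub>R (inverse t *\<^sub>R w)
        = inverse (s + t) *\<^sub>R (v + w)"
      using s t by (simp add: scaleR_add_right field_simps)
    finally show "inverse (s + t) *\<^sub>R (v + w) \<in> V" .
  qed (use s t in simp)
  have "minkowski_functional V (v + w) - t \<le> minkowski_functional V v"
    if "0 < t" "inverse t *\<^sub>R w \<in> V" for t
    unfolding minkowski_functional_def[of V v] using sum that scales_nonempty
    by (intro cInf_greatest) force+
  then have "minkowski_functional V (v + w) - minkowski_functional V v \<le> minkowski_functional V w"
    unfolding minkowski_functional_def[of V w] using scales_nonempty by (intro cInf_greatest) force+
  then show ?thesis by simp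
qed

lemma minkowski_functional_scaleR_le:
  assumes c: "0 < c"
  shows "minkowski_functional V (c *\<^sub>R v) \<le> c * minkowski_functional V v"
proof -
  have "minkowski_functional V (c *\<^sub>R v) / c \<le> t" if "0 < t" "inverse t *\<^sub>R v \<in> V" for t
    using minkowski_functional_le[of "c * t" "c *\<^sub>R v"] c that by (simp add: field_simps)
  then have "minkowski_functional V (c *\<^sub>R v) / c \<le> minkowski_functional V v"
    unfolding minkowski_functional_def[of V v] using scales_nonempty by (intro cInf_greatest) force+
  then show ?thesis using c by (simp add: field_simps)
qed

sublocale minkowski: sublinear "minkowski_functional V"
proof
  show "minkowski_functional V (c *\<^sub>R v) = c * minkowski_functional V v" if c: "0 < c" for c v
  proof (rule antisym)
    have "minkowski_functional V v \<le> inverse c * minkowski_functional V (c *\<^sub>R v)"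
      using minkowski_functional_scaleR_le[of "inverse c" "c *\<^sub>R v"] c by simp
    then show "c * minkowski_functional V v \<le> minkowski_functional V (c *\<^sub>R v)"
      using c by (simp add: field_simps)
  qed (rule minkowski_functional_scaleR_le[OF c])
qed (rule minkowski_functional_add)

end

context
  assumes lctvs: "locally_convex_tvs TYPE('a::{real_vector,t2_space})"
begin

lemma lctvs_continuous_on_add:
  fixes f g :: "'b::topological_space \<Rightarrow> 'a"
  assumes "continuous_on S f" and "continuous_on S g"
  shows "continuous_on S (\<lambda>p. f p + g p)"
proof -
  have "continuous_on UNIV (\<lambda>(x::'a, y). x + y)"
    using lctvs unfolding locally_convex_tvs_def by blast
  from continuous_on_compose2[OF this continuous_on_Pair[OF assms]] show ?thesis
    by simp
qed

lemma lctvs_continuous_on_scaleR: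
  fixes f :: "'b::topological_space \<Rightarrow> real" and g :: "'b \<Rightarrow> 'a"
  assumes "continuous_on S f" and "continuous_on S g"
  shows "continuous_on S (\<lambda>p. f p *\<^sub>R g p)"
proof -
  have "continuous_on UNIV (\<lambda>(c::real, x::'a). c *\<^sub>R x)"
    using lctvs unfolding locally_convex_tvs_def by blast
  from continuous_on_compose2[OF this continuous_on_Pair[OF assms]] show ?thesis
    by simp
qed

lemma lctvs_open_absorbing:
  fixes V :: "'a set"
  assumes "open V" and "0 \<in> V"
  shows "\<exists>t>0. inverse t *\<^sub>R v \<in> V"
proof -
  have "continuous_on UNIV (\<lambda>t::real. t *\<^sub>R v)"
    by (intro lctvs_continuous_on_scaleR continuous_on_id continuous_on_const)
  then have "open ((\<lambda>t::real. t *\<^sub>R v) -` V)"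
    using assms(1) by (rule open_vimage[rotated])
  moreover have "0 \<in> (\<lambda>t::real. t *\<^sub>R v) -` V"
    using assms(2) by simp
  ultimately obtain e where "e > 0" "ball 0 e \<subseteq> (\<lambda>t::real. t *\<^sub>R v) -` V"
    using openE by blast
  then have "(e / 2) *\<^sub>R v \<in> V"
    by (auto simp: subset_eq)
  then show ?thesis
    using \<open>e > 0\<close> by (intro exI[of _ "inverse (e / 2)"]) auto
qed

lemma lctvs_linear_continuous_if_bounded_on_nhd:
  fixes l :: "'a \<Rightarrow> real"
  assumes l: "linear l" and W: "open W" "0 \<in> W" and bounded: "\<And>w. w \<in> W \<Longrightarrow> \<bar>l w\<bar> \<le> 1"
  shows "continuous_on UNIV l"
  unfolding continuous_on_def
proof (intro ballI tendstoI)
  fix v0 :: 'a and e :: real assume e: "e > 0"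
  define S where "S = (\<lambda>v. inverse (e / 2) *\<^sub>R (v - v0)) -` W"
  have "continuous_on UNIV (\<lambda>v. inverse (e / 2) *\<^sub>R (v + (- v0)))"
    by (intro lctvs_continuous_on_scaleR lctvs_continuous_on_add continuous_on_const continuous_on_id)
  then have "open S"
    unfolding S_def using W(1) by (simp add: open_vimage)
  moreover have "v0 \<in> S"
    unfolding S_def using W(2) by simp
  moreover have "dist (l v) (l v0) < e" if "v \<in> S" for v
  proof -
    have "\<bar>l (inverse (e / 2) *\<^sub>R (v - v0))\<bar> \<le> 1"
      using bounded that unfolding S_def by simp
    then have "inverse (e / 2) * \<bar>l v - l v0\<bar> \<le> 1"
      unfolding linear_cmul[OF l] linear_diff[OF l] real_scaleR_def abs_mult
      using e by simp
    then show ?thesis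
      using e by (simp add: dist_real_def field_simps)
  qed
  ultimately show "\<forall>\<^sub>F v in at v0 within UNIV. dist (l v) (l v0) < e"
    unfolding eventually_at_topological by blast
qed

text \<open>Hahn--Banach applied to the Minkowski functional of a convex neighbourhood of 0 that
  misses x - y.\<close>
theorem lctvs_separating_functional:
  fixes x y :: 'a
  assumes "x \<noteq> y"
  shows "\<exists>l::'a \<Rightarrow> real. linear l \<and> continuous_on UNIV l \<and> l x \<noteq> l y"
proof -
  obtain U where U: "open U" "0 \<in> U" "x - y \<notin> U"
    using hausdorff[of 0 "x - y"] assms by force
  obtain V where V: "open V" "convex V" "0 \<in> V" "V \<subseteq> U"
    using lctvs U unfolding locally_convex_tvs_def by blast
  interpret convex_absorbing V
    using V lctvs_open_absorbing[OF V(1,3)] by unfold_locales auto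
  obtain l where l: "linear l" "\<And>v. l v \<le> minkowski_functional V v"
    "l (x - y) = minkowski_functional V (x - y)"
    using minkowski.hahn_banach_attaining[of "x - y"] by blast
  have "1 \<le> l (x - y)"
    using l(3) mem_if_minkowski_functional_less_one U(3) V(4) by force
  then have "l x \<noteq> l y"
    using linear_diff[OF l(1)] by auto
  moreover have "continuous_on UNIV l"
  proof (rule lctvs_linear_continuous_if_bounded_on_nhd[OF l(1)])
    have "continuous_on UNIV (\<lambda>v::'a. (- 1) *\<^sub>R v)"
      by (intro lctvs_continuous_on_scaleR continuous_on_id continuous_on_const)
    then show "open (V \<inter> (\<lambda>v. (- 1) *\<^sub>R v) -` V)"
      using V(1) by (intro open_Int open_vimage) auto
    show "0 \<in> V \<inter> (\<lambda>v. (- 1) *\<^sub>R v) -` V" using V(3) by simp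
    show "\<bar>l w\<bar> \<le> 1" if "w \<in> V \<inter> (\<lambda>v. (- 1) *\<^sub>R v) -` V" for w
    proof -
      have "w \<in> V" "- w \<in> V" using that by auto
      then show ?thesis
        using l(2)[of w] l(2)[of "- w"] minkowski_functional_le_one[of w]
          minkowski_functional_le_one[of "- w"] linear_neg[OF l(1), of w]
        unfolding abs_le_iff by linarith
    qed
  qed
  ultimately show ?thesis using l(1) by blast
qed


lemma continuous_on_diff_snd_fst:
  fixes f :: "'b::topological_space \<Rightarrow> real"
  assumes "continuous_on A f"
  shows "continuous_on (A \<times> A) (\<lambda>q. f (snd q) - f (fst q))"
proof -
  have "continuous_on (A \<times> A) (\<lambda>q. f (fst q))" "continuous_on (A \<times> A) (\<lambda>q. f (snd q))"
    by (auto intro: continuous_on_compose2[OF assms continuous_on_fst[OF continuous_on_id]]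
        continuous_on_compose2[OF assms continuous_on_snd[OF continuous_on_id]])
  then show ?thesis by (intro continuous_intros)
qed

lemma lctvs_finitely_many_separating_functionals:
  fixes D :: "('a \<times> 'a) set"
  assumes "compact D" and off_diagonal: "\<forall>(x, y)\<in>D. x \<noteq> y"
  shows "\<exists>Ls :: ('a \<Rightarrow> real) set. finite Ls \<and> (\<forall>l\<in>Ls. linear l \<and> continuous_on UNIV l)
    \<and> (\<forall>(x, y)\<in>D. \<exists>l\<in>Ls. l x \<noteq> l y)"
proof -
  define sep where "sep l \<longleftrightarrow> linear l \<and> continuous_on UNIV l" for l :: "'a \<Rightarrow> real"
  define U where "U l = {q :: 'a \<times> 'a. l (snd q) - l (fst q) \<noteq> 0}" for l :: "'a \<Rightarrow> real"
  have open_U: "open (U l)" if "l \<in> Collect sep" for l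
  proof -
    have "continuous_on UNIV (\<lambda>q::'a \<times> 'a. l (snd q) - l (fst q))"
      using continuous_on_diff_snd_fst[of UNIV l] that by (simp add: sep_def)
    then have "open ((\<lambda>q::'a \<times> 'a. l (snd q) - l (fst q)) -` (- {0}))"
      by (intro open_vimage) auto
    then show ?thesis
      unfolding U_def by (simp add: vimage_def)
  qed
  have cover_D: "D \<subseteq> (\<Union>l\<in>Collect sep. U l)"
  proof
    fix q assume "q \<in> D"
    then obtain l where "sep l" "l (fst q) \<noteq> l (snd q)"
      using lctvs_separating_functional off_diagonal unfolding sep_def by fastforce
    then show "q \<in> (\<Union>l\<in>Collect sep. U l)" unfolding U_def by auto
  qed
  obtain Ls where Ls: "Ls \<subseteq> Collect sep" "finite Ls" and cover: "D \<subseteq> (\<Union>l\<in>Ls. U l)"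
    by (rule compactE_image[OF \<open>compact D\<close> open_U cover_D])
  have "\<exists>l\<in>Ls. l x \<noteq> l y" if "(x, y) \<in> D" for x y
    using subsetD[OF cover that] unfolding U_def by (auto dest: sym)
  then have "\<forall>(x, y)\<in>D. \<exists>l\<in>Ls. l x \<noteq> l y"
    by auto
  moreover have "\<forall>l\<in>Ls. linear l \<and> continuous_on UNIV l"
    using Ls(1) unfolding sep_def by blast
  ultimately show ?thesis
    using Ls(2) by blast
qed

lemma lctvs_sum_squares_bounded_below:
  fixes D :: "('a \<times> 'a) set"
  assumes "compact D" and "\<forall>(x, y)\<in>D. x \<noteq> y"
  obtains Ls :: "('a \<Rightarrow> real) set" and \<delta> where "finite Ls" "0 < \<delta>"
    "\<And>l. l \<in> Ls \<Longrightarrow> linear l \<and> continuous_on UNIV l"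
    "\<And>x y. (x, y) \<in> D \<Longrightarrow> \<delta> \<le> (\<Sum>l\<in>Ls. (l y - l x)\<^sup>2)"
proof -
  obtain Ls :: "('a \<Rightarrow> real) set" where Ls: "finite Ls" "\<forall>l\<in>Ls. linear l \<and> continuous_on UNIV l"
    and separating: "\<forall>(x, y)\<in>D. \<exists>l\<in>Ls. l x \<noteq> l y"
    using lctvs_finitely_many_separating_functionals[OF assms] by blast
  define Q where "Q q = (\<Sum>l\<in>Ls. (l (snd q) - l (fst q))\<^sup>2)" for q :: "'a \<times> 'a"
  have Q_pos: "0 < Q (x, y)" if "(x, y) \<in> D" for x y
  proof -
    have "\<exists>l\<in>Ls. l x \<noteq> l y" using bspec[OF separating that] by simp
    then obtain l where "l \<in> Ls" "l x \<noteq> l y" by blast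
    then show ?thesis
      unfolding Q_def using Ls(1) by (intro sum_pos2[of _ l]) auto
  qed
  show ?thesis
  proof (cases "D = {}")
    case True
    show ?thesis
      by (rule that[of Ls 1]) (use Ls True in auto)
  next
    case False
    have "continuous_on D Q"
      unfolding Q_def
    proof (intro continuous_on_sum)
      fix l assume "l \<in> Ls"
      then have "continuous_on (UNIV \<times> UNIV) (\<lambda>q. l (snd q) - l (fst q))"
        using Ls(2) continuous_on_diff_snd_fst by blast
      then show "continuous_on D (\<lambda>q. (l (snd q) - l (fst q))\<^sup>2)"
        by (intro continuous_on_power) (auto elim: continuous_on_subset)
    qed
    then obtain q0 where "q0 \<in> D" and Q_min: "\<And>q. q \<in> D \<Longrightarrow> Q q0 \<le> Q q"
      using continuous_attains_inf[OF \<open>compact D\<close> False] by blast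
    have "0 < Q q0" using Q_pos \<open>q0 \<in> D\<close> by (cases q0) auto
    with Q_min show ?thesis
      using that[of Ls "Q q0"] Ls unfolding Q_def by fastforce
  qed
qed

text \<open>Off the set D where f varies by at least e, the sum of squares is bounded below,
  so a large multiple of it dominates the oscillation of f.\<close>
lemma lctvs_korovkin_estimate:
  fixes K :: "'a set" and f :: "'a \<Rightarrow> real"
  assumes "compact K" and f: "continuous_on K f" and "e > 0"
  obtains Ls :: "('a \<Rightarrow> real) set" and C where "finite Ls" "C \<ge> 0"
    "\<And>l. l \<in> Ls \<Longrightarrow> linear l \<and> continuous_on UNIV l"
    "\<And>x y. x \<in> K \<Longrightarrow> y \<in> K \<Longrightarrow> \<bar>f y - f x\<bar> \<le> e + C * (\<Sum>l\<in>Ls. (l y - l x)\<^sup>2)"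
proof -
  define D where "D = (K \<times> K) \<inter> (\<lambda>q. \<bar>f (snd q) - f (fst q)\<bar>) -` {e..}"
  have "continuous_on (K \<times> K) (\<lambda>q. \<bar>f (snd q) - f (fst q)\<bar>)"
    using continuous_on_diff_snd_fst[OF f] by (rule continuous_on_rabs)
  then have "closedin (top_of_set (K \<times> K)) D"
    unfolding D_def by (rule continuous_closedin_preimage[OF _ closed_atLeast])
  then have "compact D"
    by (rule closedin_compact[OF compact_Times[OF \<open>compact K\<close> \<open>compact K\<close>]])
  moreover have "\<forall>(x, y)\<in>D. x \<noteq> y"
    using \<open>e > 0\<close> unfolding D_def by auto
  ultimately obtain Ls :: "('a \<Rightarrow> real) set" and \<delta> where Ls: "finite Ls" "0 < \<delta>"
    "\<And>l. l \<in> Ls \<Longrightarrow> linear l \<and> continuous_on UNIV l"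
    and bounded_below: "\<And>x y. (x, y) \<in> D \<Longrightarrow> \<delta> \<le> (\<Sum>l\<in>Ls. (l y - l x)\<^sup>2)"
    by (rule lctvs_sum_squares_bounded_below) blast
  obtain B where "B \<ge> 0" and B: "\<And>x. x \<in> K \<Longrightarrow> \<bar>f x\<bar> \<le> B"
    using continuous_on_compact_bound[OF \<open>compact K\<close> f] by auto
  define C where "C = 2 * B / \<delta>"
  have "C \<ge> 0" unfolding C_def using \<open>0 < \<delta>\<close> \<open>B \<ge> 0\<close> by simp
  have estimate: "\<bar>f y - f x\<bar> \<le> e + C * (\<Sum>l\<in>Ls. (l y - l x)\<^sup>2)" if "x \<in> K" "y \<in> K" for x y
  proof (cases "(x, y) \<in> D")
    case True
    have "\<bar>f y - f x\<bar> \<le> C * \<delta>"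
      using B[of x] B[of y] that \<open>0 < \<delta>\<close> unfolding C_def by simp
    also have "\<dots> \<le> C * (\<Sum>l\<in>Ls. (l y - l x)\<^sup>2)"
      using bounded_below[OF True] \<open>C \<ge> 0\<close> by (rule mult_left_mono)
    finally show ?thesis using \<open>e > 0\<close> by simp
  next
    case False
    then have "\<bar>f y - f x\<bar> < e" using that unfolding D_def by auto
    moreover have "0 \<le> C * (\<Sum>l\<in>Ls. (l y - l x)\<^sup>2)"
      using \<open>C \<ge> 0\<close> by (simp add: sum_nonneg)
    ultimately show ?thesis by simp
  qed
  show ?thesis
    by (rule that[OF Ls(1) \<open>C \<ge> 0\<close> Ls(3) estimate])
qed

end

section \<open>Iterated integrals of continuous functions\<close>

lemma space_eq_if_sets_eq_restrict_borel:
  "sets M = sets (restrict_space borel K) \<Longrightarrow> space M = K"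
  by (drule sets_eq_imp_space_eq) (simp add: space_restrict_space)

lemma integrable_continuous_on_compact:
  fixes g :: "'a::topological_space \<Rightarrow> real"
  assumes "finite_measure M" and sets_M: "sets M = sets (restrict_space borel K)"
    and "compact K" and g: "continuous_on K g"
  shows "integrable M g"
proof -
  interpret finite_measure M by fact
  obtain B where "\<And>x. x \<in> K \<Longrightarrow> norm (g x) \<le> B"
    using continuous_on_compact_bound[OF \<open>compact K\<close> g] by metis
  moreover have "g \<in> borel_measurable M"
    using measurable_cong_sets[OF sets_M refl] borel_measurable_continuous_on_restrict[OF g] by blast
  ultimately show ?thesis
    using space_eq_if_sets_eq_restrict_borel[OF sets_M] by (intro integrable_const_bound[where B=B]) auto
qed

lemma continuous_on_parametric_integral:
  fixes H :: "'c::topological_space \<times> 'a::topological_space \<Rightarrow> real"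
  assumes "prob_space M" and sets_M: "sets M = sets (restrict_space borel K)"
    and "compact K" and H: "continuous_on (S \<times> K) H"
  shows "continuous_on S (\<lambda>s. \<integral>y. H (s, y) \<partial>M)"
  unfolding continuous_on_def
proof (intro ballI tendstoI)
  interpret prob_space M by fact
  fix s0 and e :: real assume "s0 \<in> S" "0 < e"
  then obtain U where "s0 \<in> U" "open U"
    and near: "\<forall>s\<in>U \<inter> S. \<forall>y\<in>K. dist (H (s, y)) (H (s0, y)) \<le> e / 2"
    using continuous_on_prod_compactE[OF H \<open>compact K\<close>, of s0 "e / 2"] by auto
  have integrable: "integrable M (\<lambda>y. H (s, y))" if "s \<in> S" for s
    using finite_measure sets_M \<open>compact K\<close>
    by (rule integrable_continuous_on_compact)
      (auto intro!: continuous_on_compose2[OF H] continuous_intros simp: that)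
  have "dist (\<integral>y. H (s, y) \<partial>M) (\<integral>y. H (s0, y) \<partial>M) < e" if "s \<in> U" "s \<in> S" for s
  proof -
    have "\<bar>\<integral>y. H (s, y) - H (s0, y) \<partial>M\<bar> \<le> (\<integral>y. \<bar>H (s, y) - H (s0, y)\<bar> \<partial>M)"
      by (rule integral_abs_bound)
    also have "\<dots> \<le> e / 2"
      using integrable that \<open>s0 \<in> S\<close> near space_eq_if_sets_eq_restrict_borel[OF sets_M]
      by (intro integral_le_const) (auto simp: dist_real_def)
    finally show ?thesis
      using integrable that \<open>s0 \<in> S\<close> \<open>0 < e\<close> by (simp add: dist_real_def)
  qed
  then show "\<forall>\<^sub>F s in at s0 within S. dist (\<integral>y. H (s, y) \<partial>M) (\<integral>y. H (s0, y) \<partial>M) < e"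
    unfolding eventually_at_topological using \<open>open U\<close> \<open>s0 \<in> U\<close> by blast
qed

text \<open>iter_int integrates over lists, which carry no topology. The integrands of C_n only depend
  on the sum of the list, so we integrate over that sum instead and keep track of continuity in
  the vector space itself.\<close>
fun sum_iter_int :: "'a measure \<Rightarrow> nat \<Rightarrow> ('a \<Rightarrow> real) \<Rightarrow> 'a::real_vector \<Rightarrow> real" where
  "sum_iter_int M 0 G s = G s"
| "sum_iter_int M (Suc k) G s = (\<integral>y. sum_iter_int M k G (y + s) \<partial>M)"

lemma iter_int_sum_list:
  "iter_int k M (\<lambda>xs. G (sum_list xs + w)) xs = sum_iter_int M k G (sum_list xs + w)"
  by (induction k arbitrary: xs) (simp_all add: add.assoc)

lemma sum_iter_int_cmult: "sum_iter_int M k (\<lambda>s. c * G s) s = c * sum_iter_int M k G s"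
  by (induction k arbitrary: s) simp_all

definition sum_points :: "'a::real_vector set \<Rightarrow> real \<Rightarrow> nat \<Rightarrow> 'a set" where
  "sum_points K a j = {sum_list ys + a *\<^sub>R z | ys z. length ys = j \<and> set ys \<subseteq> K \<and> z \<in> K}"

lemma sum_points_0: "z \<in> K \<Longrightarrow> a *\<^sub>R z \<in> sum_points K a 0"
  unfolding sum_points_def by force

lemma sum_points_Suc:
  assumes "y \<in> K" and "s \<in> sum_points K a j"
  shows "y + s \<in> sum_points K a (Suc j)"
proof -
  obtain ys z where "s = sum_list ys + a *\<^sub>R z" "length ys = j" "set ys \<subseteq> K" "z \<in> K"
    using assms(2) unfolding sum_points_def by blast
  then show ?thesis
    unfolding sum_points_def using assms(1)
    by (intro CollectI exI[of _ "y # ys"] exI[of _ z]) (simp add: add.assoc)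
qed

lemma convex_weighted_mean_mem:
  assumes "convex K" and "set ys \<subseteq> K" and "z \<in> K" and "0 \<le> a" and "0 < real (length ys) + a"
  shows "inverse (real (length ys) + a) *\<^sub>R (sum_list ys + a *\<^sub>R z) \<in> K"
  using assms(2,5)
proof (induction ys)
  case Nil
  then show ?case using \<open>z \<in> K\<close> by simp
next
  case (Cons y ys)
  define m where "m = real (length ys) + a"
  show ?case
  proof (cases "m = 0")
    case True
    then have "length ys = 0" "a = 0" using \<open>0 \<le> a\<close> unfolding m_def by linarith+
    then show ?thesis using Cons.prems by simp
  next
    case False
    then have "0 < m" using \<open>0 \<le> a\<close> unfolding m_def by simp
    then have "(1 / (m + 1)) *\<^sub>R y + (m / (m + 1)) *\<^sub>R (inverse m *\<^sub>R (sum_list ys + a *\<^sub>R z)) \<in> K"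
      using Cons unfolding m_def
      by (intro convexD[OF \<open>convex K\<close>]) (auto simp: add_divide_distrib[symmetric])
    also have "(1 / (m + 1)) *\<^sub>R y + (m / (m + 1)) *\<^sub>R (inverse m *\<^sub>R (sum_list ys + a *\<^sub>R z))
        = inverse (real (length (y # ys)) + a) *\<^sub>R (sum_list (y # ys) + a *\<^sub>R z)"
    proof -
      have "(m / (m + 1)) *\<^sub>R (inverse m *\<^sub>R (sum_list ys + a *\<^sub>R z))
          = inverse (m + 1) *\<^sub>R (sum_list ys + a *\<^sub>R z)"
        using \<open>0 < m\<close> by (simp add: field_simps)
      moreover have "real (length (y # ys)) + a = m + 1" unfolding m_def by simp
      ultimately show ?thesis by (simp add: scaleR_add_right divide_inverse ac_simps)
    qed
    finally show ?thesis .
  qed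
qed

lemma sum_points_scaled_mem:
  assumes "convex K" and "0 \<le> a" and "1 \<le> n" and "s \<in> sum_points K a n"
  shows "inverse (real n + a) *\<^sub>R s \<in> K"
  using assms convex_weighted_mean_mem unfolding sum_points_def by fastforce

locale prob_on_compact =
  fixes K :: "'a::{real_vector,t2_space} set" and M :: "'a measure"
  assumes lctvs: "locally_convex_tvs TYPE('a)" and compact: "compact K"
    and prob: "prob_space M" and sets_M: "sets M = sets (restrict_space borel K)"
begin

lemma space_M: "space M = K"
  by (rule space_eq_if_sets_eq_restrict_borel[OF sets_M])

lemma integrable_continuous: "continuous_on K g \<Longrightarrow> integrable M (g :: 'a \<Rightarrow> real)"
  by (rule integrable_continuous_on_compact[OF prob_space.finite_measure[OF prob] sets_M compact])

lemma continuous_on_sum_iter_int: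
  assumes G: "continuous_on (sum_points K a m) G" and "k \<le> m"
  shows "continuous_on (sum_points K a (m - k)) (sum_iter_int M k G)"
  using \<open>k \<le> m\<close>
proof (induction k)
  case (Suc k)
  then have m: "m - k = Suc (m - Suc k)" by simp
  have "continuous_on (sum_points K a (m - Suc k) \<times> K) (\<lambda>q. sum_iter_int M k G (snd q + fst q))"
  proof (rule continuous_on_compose2[OF Suc.IH[unfolded m]])
    show "continuous_on (sum_points K a (m - Suc k) \<times> K) (\<lambda>q. snd q + fst q)"
      by (intro lctvs_continuous_on_add[OF lctvs] continuous_on_fst continuous_on_snd continuous_on_id)
    show "(\<lambda>q. snd q + fst q) ` (sum_points K a (m - Suc k) \<times> K) \<subseteq> sum_points K a (Suc (m - Suc k))"
      using sum_points_Suc by auto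
  qed (use Suc.prems in simp)
  from continuous_on_parametric_integral[OF prob sets_M compact this] show ?case
    by simp
qed (use G in simp)

lemma integrable_sum_iter_int_shift:
  assumes G: "continuous_on (sum_points K a m) G" and "k < m"
    and s: "s \<in> sum_points K a (m - Suc k)"
  shows "integrable M (\<lambda>y. sum_iter_int M k G (y + s))"
proof (rule integrable_continuous)
  have m: "m - k = Suc (m - Suc k)" using \<open>k < m\<close> by simp
  show "continuous_on K (\<lambda>y. sum_iter_int M k G (y + s))"
  proof (rule continuous_on_compose2[OF continuous_on_sum_iter_int[OF G, of k, unfolded m]])
    show "continuous_on K (\<lambda>y. y + s)"
      by (intro lctvs_continuous_on_add[OF lctvs] continuous_on_id continuous_on_const)
    show "(\<lambda>y. y + s) ` K \<subseteq> sum_points K a (Suc (m - Suc k))"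
      using sum_points_Suc s by auto
  qed (use \<open>k < m\<close> in simp)
qed

lemma sum_iter_int_mono:
  assumes G1: "continuous_on (sum_points K a m) G1" and G2: "continuous_on (sum_points K a m) G2"
    and le: "\<And>s. s \<in> sum_points K a m \<Longrightarrow> G1 s \<le> G2 s"
  shows "k \<le> m \<Longrightarrow> s \<in> sum_points K a (m - k) \<Longrightarrow> sum_iter_int M k G1 s \<le> sum_iter_int M k G2 s"
proof (induction k arbitrary: s)
  case (Suc k)
  then have "m - k = Suc (m - Suc k)" by simp
  with Suc show ?case
    using integrable_sum_iter_int_shift[OF G1] integrable_sum_iter_int_shift[OF G2]
    by (auto simp: space_M intro!: integral_mono Suc.IH sum_points_Suc)
qed (use le in simp)

lemma sum_iter_int_add:
  assumes G1: "continuous_on (sum_points K a m) G1" and G2: "continuous_on (sum_points K a m) G2"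
  shows "k \<le> m \<Longrightarrow> s \<in> sum_points K a (m - k) \<Longrightarrow>
    sum_iter_int M k (\<lambda>s. G1 s + G2 s) s = sum_iter_int M k G1 s + sum_iter_int M k G2 s"
proof (induction k arbitrary: s)
  case (Suc k)
  then have m: "m - k = Suc (m - Suc k)" by simp
  have "sum_iter_int M (Suc k) (\<lambda>s. G1 s + G2 s) s
      = (\<integral>y. sum_iter_int M k G1 (y + s) + sum_iter_int M k G2 (y + s) \<partial>M)"
    using Suc by (auto simp: space_M m intro!: Bochner_Integration.integral_cong Suc.IH sum_points_Suc)
  also have "\<dots> = sum_iter_int M (Suc k) G1 s + sum_iter_int M (Suc k) G2 s"
    using Suc.prems integrable_sum_iter_int_shift[OF G1] integrable_sum_iter_int_shift[OF G2]
    by (simp add: Suc_le_eq)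
  finally show ?case .
qed simp

lemma sum_iter_int_const: "sum_iter_int M k (\<lambda>_. c) s = c"
  by (induction k arbitrary: s) (simp_all add: prob_space.prob_space[OF prob])

lemma sum_iter_int_square:
  fixes l :: "'a \<Rightarrow> real"
  assumes l: "linear l" "continuous_on UNIV l" and mean: "(\<integral>y. l y \<partial>M) = m"
  shows "sum_iter_int M k (\<lambda>s. (\<alpha> * l s + \<beta>)\<^sup>2) s
      = (\<alpha> * l s + \<beta> + real k * \<alpha> * m)\<^sup>2 + real k * \<alpha>\<^sup>2 * (\<integral>y. (l y - m)\<^sup>2 \<partial>M)"
proof (induction k arbitrary: s)
  case (Suc k)
  interpret prob_space M by (rule prob)
  define V where "V = (\<integral>y. (l y - m)\<^sup>2 \<partial>M)"
  define w where "w = \<alpha> * l s + \<beta> + real (Suc k) * \<alpha> * m"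
  have lK: "continuous_on K l" using l(2) by (rule continuous_on_subset) simp
  have integrable: "integrable M l" "integrable M (\<lambda>y. (l y - m)\<^sup>2)"
    by (intro integrable_continuous continuous_intros lK)+
  have "sum_iter_int M k (\<lambda>s. (\<alpha> * l s + \<beta>)\<^sup>2) (y + s)
      = \<alpha>\<^sup>2 * (l y - m)\<^sup>2 + (2 * \<alpha> * w) * (l y - m) + (w\<^sup>2 + real k * \<alpha>\<^sup>2 * V)" for y
    unfolding Suc.IH V_def[symmetric] w_def using linear_add[OF l(1), of y s]
    by (simp add: power2_eq_square algebra_simps)
  then have "sum_iter_int M (Suc k) (\<lambda>s. (\<alpha> * l s + \<beta>)\<^sup>2) s
      = \<alpha>\<^sup>2 * V + (2 * \<alpha> * w) * ((\<integral>y. l y \<partial>M) - m) + (w\<^sup>2 + real k * \<alpha>\<^sup>2 * V)"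
    using integrable by (simp add: V_def prob_space)
  also have "\<dots> = w\<^sup>2 + real (Suc k) * \<alpha>\<^sup>2 * V"
    using mean by (simp add: algebra_simps)
  finally show ?case unfolding w_def V_def .
qed simp

end

section \<open>The operators C_n\<close>

lemma inverse_square_weight_le:
  fixes a n :: real
  assumes "0 \<le> a" and "1 \<le> n"
  shows "(a\<^sup>2 + n) / (n + a)\<^sup>2 \<le> (a\<^sup>2 + 1) / n"
proof -
  have "a\<^sup>2 + n \<le> (a\<^sup>2 + 1) * n"
    using assms mult_right_mono[of 1 n "a\<^sup>2"] by (simp add: algebra_simps)
  moreover have "n * n \<le> (n + a)\<^sup>2"
    using assms by (simp add: power2_eq_square mult_mono)
  ultimately have "(a\<^sup>2 + n) / (n + a)\<^sup>2 \<le> ((a\<^sup>2 + 1) * n) / (n * n)"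
    using assms by (intro frac_le) auto
  then show ?thesis
    using assms by simp
qed

lemma integral_linear_eq_if_T_fixes_affine:
  fixes l :: "'a::{real_vector,topological_space} \<Rightarrow> real" and T :: "('a \<Rightarrow> real) \<Rightarrow> ('a \<Rightarrow> real)"
  assumes T_affine: "\<And>h. continuous_on K h \<Longrightarrow> affine_on K h \<Longrightarrow> \<forall>x\<in>K. T h x = h x"
    and represents: "\<And>f. continuous_on K f \<Longrightarrow> (\<integral>y. f y \<partial>M) = T f x"
    and "x \<in> K" and l: "linear l" "continuous_on UNIV l"
  shows "(\<integral>y. l y \<partial>M) = l x"
proof -
  have lK: "continuous_on K l" using l(2) by (rule continuous_on_subset) simp
  have "affine_on K l"
    unfolding affine_on_def using linear_add[OF l(1)] linear_cmul[OF l(1)] by simp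
  then show ?thesis
    using represents[OF lK] T_affine[OF lK] \<open>x \<in> K\<close> by simp
qed

locale C_op_setting =
  fixes K :: "'a::{real_vector,t2_space} set"
    and mu :: "'a \<Rightarrow> 'a measure"
    and mus :: "nat \<Rightarrow> 'a measure"
    and a :: real
  assumes lctvs: "locally_convex_tvs TYPE('a)"
    and convex: "convex K" and compact: "compact K"
    and mu_prob: "\<And>x. x \<in> K \<Longrightarrow> borel_prob_on K (mu x)"
    and mu_barycenter: "\<And>x l. x \<in> K \<Longrightarrow> linear l \<Longrightarrow> continuous_on UNIV l \<Longrightarrow> (\<integral>y. l y \<partial>(mu x)) = (l x :: real)"
    and a_nonneg: "a \<ge> 0"
    and mus_prob: "\<And>n. n \<ge> 1 \<Longrightarrow> borel_prob_on K (mus n)"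
begin

lemma prob_on_compact_mu: "x \<in> K \<Longrightarrow> prob_on_compact K (mu x)"
  using mu_prob lctvs compact unfolding borel_prob_on_def prob_on_compact_def by blast

lemma prob_on_compact_mus: "n \<ge> 1 \<Longrightarrow> prob_on_compact K (mus n)"
  using mus_prob lctvs compact unfolding borel_prob_on_def prob_on_compact_def by blast

lemma C_op_eq_sum_iter_int:
  "C_op mu mus a n g x
    = (\<integral>z. sum_iter_int (mu x) n (\<lambda>s. g (inverse (real n + a) *\<^sub>R s)) (a *\<^sub>R z) \<partial>(mus n))"
proof -
  have "iter_int n (mu x) (\<lambda>xs. g (inverse (real n + a) *\<^sub>R (sum_list xs + a *\<^sub>R z))) []
      = sum_iter_int (mu x) n (\<lambda>s. g (inverse (real n + a) *\<^sub>R s)) (a *\<^sub>R z)" for z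
    using iter_int_sum_list[of n "mu x" "\<lambda>s. g (inverse (real n + a) *\<^sub>R s)" "a *\<^sub>R z" "[]"] by simp
  then show ?thesis unfolding C_op_def by simp
qed

lemma continuous_on_scaled:
  assumes "n \<ge> 1" and g: "continuous_on K g"
  shows "continuous_on (sum_points K a n) (\<lambda>s. g (inverse (real n + a) *\<^sub>R s))"
proof (rule continuous_on_compose2[OF g])
  show "continuous_on (sum_points K a n) (\<lambda>s. inverse (real n + a) *\<^sub>R s)"
    by (intro lctvs_continuous_on_scaleR[OF lctvs] continuous_on_const continuous_on_id)
  show "(\<lambda>s. inverse (real n + a) *\<^sub>R s) ` sum_points K a n \<subseteq> K"
    using sum_points_scaled_mem[OF convex a_nonneg \<open>n \<ge> 1\<close>] by blast
qed

lemma integrable_C_op_integrand: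
  assumes "x \<in> K" and "n \<ge> 1" and g: "continuous_on K g"
  shows "integrable (mus n) (\<lambda>z. sum_iter_int (mu x) n (\<lambda>s. g (inverse (real n + a) *\<^sub>R s)) (a *\<^sub>R z))"
proof (rule prob_on_compact.integrable_continuous[OF prob_on_compact_mus[OF \<open>n \<ge> 1\<close>]])
  interpret prob_on_compact K "mu x" by (rule prob_on_compact_mu[OF \<open>x \<in> K\<close>])
  show "continuous_on K (\<lambda>z. sum_iter_int (mu x) n (\<lambda>s. g (inverse (real n + a) *\<^sub>R s)) (a *\<^sub>R z))"
  proof (rule continuous_on_compose2[where f="\<lambda>z. a *\<^sub>R z"])
    show "continuous_on (sum_points K a 0) (sum_iter_int (mu x) n (\<lambda>s. g (inverse (real n + a) *\<^sub>R s)))"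
      using continuous_on_sum_iter_int[OF continuous_on_scaled[OF \<open>n \<ge> 1\<close> g], of n] by simp
    show "continuous_on K (\<lambda>z. a *\<^sub>R z)"
      by (intro lctvs_continuous_on_scaleR[OF lctvs] continuous_on_const continuous_on_id)
    show "(\<lambda>z. a *\<^sub>R z) ` K \<subseteq> sum_points K a 0"
      using sum_points_0 by blast
  qed
qed

lemma C_op_mono:
  assumes "x \<in> K" and "n \<ge> 1" and g1: "continuous_on K g1" and g2: "continuous_on K g2"
    and le: "\<And>y. y \<in> K \<Longrightarrow> g1 y \<le> g2 y"
  shows "C_op mu mus a n g1 x \<le> C_op mu mus a n g2 x"
proof -
  interpret prob_on_compact K "mu x" by (rule prob_on_compact_mu[OF \<open>x \<in> K\<close>])
  have "sum_iter_int (mu x) n (\<lambda>s. g1 (inverse (real n + a) *\<^sub>R s)) (a *\<^sub>R z)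
      \<le> sum_iter_int (mu x) n (\<lambda>s. g2 (inverse (real n + a) *\<^sub>R s)) (a *\<^sub>R z)" if "z \<in> K" for z
    using continuous_on_scaled[OF \<open>n \<ge> 1\<close> g1] continuous_on_scaled[OF \<open>n \<ge> 1\<close> g2]
      le sum_points_scaled_mem[OF convex a_nonneg \<open>n \<ge> 1\<close>] sum_points_0[OF that]
    by (intro sum_iter_int_mono) auto
  then show ?thesis
    unfolding C_op_eq_sum_iter_int
    using integrable_C_op_integrand[OF assms(1,2)] g1 g2
      prob_on_compact.space_M[OF prob_on_compact_mus[OF \<open>n \<ge> 1\<close>]]
    by (intro integral_mono) auto
qed

lemma C_op_add:
  assumes "x \<in> K" and "n \<ge> 1" and g1: "continuous_on K g1" and g2: "continuous_on K g2"
  shows "C_op mu mus a n (\<lambda>y. g1 y + g2 y) x = C_op mu mus a n g1 x + C_op mu mus a n g2 x"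
proof -
  interpret prob_on_compact K "mu x" by (rule prob_on_compact_mu[OF \<open>x \<in> K\<close>])
  have "sum_iter_int (mu x) n (\<lambda>s. g1 (inverse (real n + a) *\<^sub>R s) + g2 (inverse (real n + a) *\<^sub>R s)) (a *\<^sub>R z)
      = sum_iter_int (mu x) n (\<lambda>s. g1 (inverse (real n + a) *\<^sub>R s)) (a *\<^sub>R z)
        + sum_iter_int (mu x) n (\<lambda>s. g2 (inverse (real n + a) *\<^sub>R s)) (a *\<^sub>R z)" if "z \<in> K" for z
    using continuous_on_scaled[OF \<open>n \<ge> 1\<close> g1] continuous_on_scaled[OF \<open>n \<ge> 1\<close> g2]
      sum_points_0[OF that]
    by (intro sum_iter_int_add) auto
  then have "C_op mu mus a n (\<lambda>y. g1 y + g2 y) x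
      = (\<integral>z. sum_iter_int (mu x) n (\<lambda>s. g1 (inverse (real n + a) *\<^sub>R s)) (a *\<^sub>R z)
          + sum_iter_int (mu x) n (\<lambda>s. g2 (inverse (real n + a) *\<^sub>R s)) (a *\<^sub>R z) \<partial>(mus n))"
    unfolding C_op_eq_sum_iter_int
    using prob_on_compact.space_M[OF prob_on_compact_mus[OF \<open>n \<ge> 1\<close>]]
    by (intro Bochner_Integration.integral_cong) auto
  also have "\<dots> = C_op mu mus a n g1 x + C_op mu mus a n g2 x"
    unfolding C_op_eq_sum_iter_int
    using integrable_C_op_integrand[OF assms(1,2) g1] integrable_C_op_integrand[OF assms(1,2) g2]
    by (rule Bochner_Integration.integral_add)
  finally show ?thesis .
qed

lemma C_op_cmult: "C_op mu mus a n (\<lambda>y. c * g y) x = c * C_op mu mus a n g x"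
  unfolding C_op_eq_sum_iter_int by (simp add: sum_iter_int_cmult)

lemma C_op_const:
  assumes "x \<in> K" and "n \<ge> 1" shows "C_op mu mus a n (\<lambda>_. c) x = c"
  unfolding C_op_eq_sum_iter_int prob_on_compact.sum_iter_int_const[OF prob_on_compact_mu[OF assms(1)]]
  using prob_on_compact.prob[OF prob_on_compact_mus[OF assms(2)]] by (simp add: prob_space.prob_space)

lemma C_op_sum:
  assumes "x \<in> K" and "n \<ge> 1" and "finite I" and g: "\<And>i. i \<in> I \<Longrightarrow> continuous_on K (g i)"
  shows "C_op mu mus a n (\<lambda>y. \<Sum>i\<in>I. g i y) x = (\<Sum>i\<in>I. C_op mu mus a n (g i) x)"
  using \<open>finite I\<close> g
proof (induction I rule: finite_induct)
  case empty
  then show ?case using C_op_const[OF assms(1,2), of 0] by simp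
next
  case (insert i I)
  then show ?case
    using C_op_add[OF assms(1,2), of "g i" "\<lambda>y. \<Sum>i\<in>I. g i y"] by (simp add: continuous_on_sum)
qed

text \<open>Since mu x has barycenter x, the n averaged variances contribute n/(n+a)^2 and the
  term weighted by a contributes a^2/(n+a)^2, both of order 1/n.\<close>
lemma C_op_second_moment_le:
  assumes "x \<in> K" and "n \<ge> 1" and l: "linear l" "continuous_on UNIV l"
    and bound: "\<And>y. y \<in> K \<Longrightarrow> (l y - l x)\<^sup>2 \<le> D"
  shows "C_op mu mus a n (\<lambda>y. (l y - l x)\<^sup>2) x \<le> (a\<^sup>2 + 1) / real n * D"
proof -
  interpret prob_on_compact K "mu x" by (rule prob_on_compact_mu[OF \<open>x \<in> K\<close>])
  interpret mus: prob_on_compact K "mus n" by (rule prob_on_compact_mus[OF \<open>n \<ge> 1\<close>])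
  define \<alpha> where "\<alpha> = inverse (real n + a)"
  define V where "V = (\<integral>y. (l y - l x)\<^sup>2 \<partial>(mu x))"
  have "0 \<le> D" using bound[OF \<open>x \<in> K\<close>] by simp
  have lK: "continuous_on K l" using l(2) by (rule continuous_on_subset) simp
  have "V \<le> D"
    unfolding V_def
  proof (rule prob_space.integral_le_const[OF prob])
    show "integrable (mu x) (\<lambda>y. (l y - l x)\<^sup>2)"
      by (intro integrable_continuous continuous_intros lK)
    show "AE y in mu x. (l y - l x)\<^sup>2 \<le> D"
      using bound by (intro AE_I2) (simp add: space_M)
  qed
  have "sum_iter_int (mu x) n (\<lambda>s. (l (\<alpha> *\<^sub>R s) - l x)\<^sup>2) (a *\<^sub>R z)
      = (\<alpha> * a * (l z - l x))\<^sup>2 + real n * \<alpha>\<^sup>2 * V" for z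
  proof -
    have "(\<lambda>s. (l (\<alpha> *\<^sub>R s) - l x)\<^sup>2) = (\<lambda>s. (\<alpha> * l s + - l x)\<^sup>2)"
      using linear_cmul[OF l(1)] by simp
    moreover have "\<alpha> * l (a *\<^sub>R z) + - l x + real n * \<alpha> * l x = \<alpha> * a * (l z - l x)"
    proof -
      have "l x = \<alpha> * (real n + a) * l x"
        using a_nonneg \<open>n \<ge> 1\<close> by (simp add: \<alpha>_def)
      then show ?thesis
        using linear_cmul[OF l(1), of a z] by (simp add: algebra_simps)
    qed
    ultimately show ?thesis
      using sum_iter_int_square[OF l mu_barycenter[OF \<open>x \<in> K\<close> l], of n \<alpha> "- l x" "a *\<^sub>R z"]
      unfolding V_def by simp
  qed
  then have "C_op mu mus a n (\<lambda>y. (l y - l x)\<^sup>2) x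
      = (\<integral>z. (\<alpha> * a * (l z - l x))\<^sup>2 + real n * \<alpha>\<^sup>2 * V \<partial>(mus n))"
    unfolding C_op_eq_sum_iter_int \<alpha>_def by simp
  also have "\<dots> \<le> \<alpha>\<^sup>2 * (a\<^sup>2 + real n) * D"
  proof (rule prob_space.integral_le_const[OF mus.prob])
    show "integrable (mus n) (\<lambda>z. (\<alpha> * a * (l z - l x))\<^sup>2 + real n * \<alpha>\<^sup>2 * V)"
      by (intro mus.integrable_continuous continuous_intros lK)
    have "(\<alpha> * a * (l z - l x))\<^sup>2 + real n * \<alpha>\<^sup>2 * V \<le> \<alpha>\<^sup>2 * (a\<^sup>2 + real n) * D" if "z \<in> K" for z
    proof -
      have "(\<alpha> * a * (l z - l x))\<^sup>2 \<le> \<alpha>\<^sup>2 * a\<^sup>2 * D"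
        using bound[OF that] by (simp add: power_mult_distrib mult_left_mono)
      moreover have "real n * \<alpha>\<^sup>2 * V \<le> real n * \<alpha>\<^sup>2 * D"
        using \<open>V \<le> D\<close> by (simp add: mult_left_mono)
      ultimately show ?thesis by (simp add: algebra_simps)
    qed
    then show "AE z in mus n. (\<alpha> * a * (l z - l x))\<^sup>2 + real n * \<alpha>\<^sup>2 * V \<le> \<alpha>\<^sup>2 * (a\<^sup>2 + real n) * D"
      by (intro AE_I2) (simp add: mus.space_M)
  qed
  also have "\<dots> \<le> (a\<^sup>2 + 1) / real n * D"
    using inverse_square_weight_le[OF a_nonneg, of "real n"] \<open>n \<ge> 1\<close> \<open>0 \<le> D\<close>
    by (intro mult_right_mono) (simp_all add: \<alpha>_def power_inverse divide_inverse mult.commute)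
  finally show ?thesis .
qed

lemma C_op_deviation_le:
  assumes "x \<in> K" and "n \<ge> 1" and f: "continuous_on K f" and q: "continuous_on K q"
    and est: "\<And>y. y \<in> K \<Longrightarrow> \<bar>f y - f x\<bar> \<le> e + c * q y"
  shows "\<bar>C_op mu mus a n f x - f x\<bar> \<le> e + c * C_op mu mus a n q x"
proof -
  have majorant: "continuous_on K (\<lambda>y. e + c * q y)"
    by (intro continuous_intros q)
  have "C_op mu mus a n (\<lambda>y. f y + (- f x)) x \<le> C_op mu mus a n (\<lambda>y. e + c * q y) x"
    using est by (intro C_op_mono[OF assms(1,2) _ majorant] continuous_intros f) (auto simp: abs_le_iff)
  moreover have "C_op mu mus a n (\<lambda>y. f x + (- 1) * f y) x \<le> C_op mu mus a n (\<lambda>y. e + c * q y) x"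
    using est by (intro C_op_mono[OF assms(1,2) _ majorant] continuous_intros f) (auto simp: abs_le_iff)
  moreover have "C_op mu mus a n (\<lambda>y. e + c * q y) x = e + c * C_op mu mus a n q x"
    using C_op_add[OF assms(1,2) continuous_on_const continuous_on_mult[OF continuous_on_const q]]
    by (simp add: C_op_const[OF assms(1,2)] C_op_cmult)
  moreover have "C_op mu mus a n (\<lambda>y. f y + (- f x)) x = C_op mu mus a n f x - f x"
    using C_op_add[OF assms(1,2) f continuous_on_const, of "- f x"] by (simp add: C_op_const[OF assms(1,2)])
  moreover have "C_op mu mus a n (\<lambda>y. f x + (- 1) * f y) x = f x - C_op mu mus a n f x"
    using C_op_add[OF assms(1,2) continuous_on_const[of K "f x"]
        continuous_on_mult[OF continuous_on_const[of K "- 1"] f]] C_op_cmult[where c="- 1" and g=f]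
    by (simp add: C_op_const[OF assms(1,2)])
  ultimately show ?thesis by linarith
qed

lemma C_op_sum_squares_le:
  assumes "finite Ls" and Ls: "\<And>l. l \<in> Ls \<Longrightarrow> linear l \<and> continuous_on UNIV l"
  obtains R where "\<And>n x. n \<ge> 1 \<Longrightarrow> x \<in> K \<Longrightarrow>
    C_op mu mus a n (\<lambda>y. \<Sum>l\<in>Ls. (l y - l x)\<^sup>2) x \<le> R / real n"
proof -
  have lK: "continuous_on K l" if "l \<in> Ls" for l
    using Ls[OF that] continuous_on_subset by blast
  have "\<exists>b. \<forall>y\<in>K. \<bar>l y\<bar> \<le> b" if "l \<in> Ls" for l
    using continuous_on_compact_bound[OF compact lK[OF that]] by (metis real_norm_def)
  then obtain B where B: "\<And>l y. l \<in> Ls \<Longrightarrow> y \<in> K \<Longrightarrow> \<bar>l y\<bar> \<le> B l"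
    by metis
  define R where "R = (a\<^sup>2 + 1) * (\<Sum>l\<in>Ls. (2 * B l)\<^sup>2)"
  have "C_op mu mus a n (\<lambda>y. \<Sum>l\<in>Ls. (l y - l x)\<^sup>2) x \<le> R / real n"
    if "n \<ge> 1" "x \<in> K" for n x
  proof -
    have "C_op mu mus a n (\<lambda>y. \<Sum>l\<in>Ls. (l y - l x)\<^sup>2) x = (\<Sum>l\<in>Ls. C_op mu mus a n (\<lambda>y. (l y - l x)\<^sup>2) x)"
      using lK by (intro C_op_sum[OF that(2,1) \<open>finite Ls\<close>] continuous_intros)
    also have "\<dots> \<le> (\<Sum>l\<in>Ls. (a\<^sup>2 + 1) / real n * (2 * B l)\<^sup>2)"
    proof (rule sum_mono)
      fix l assume "l \<in> Ls"
      have "(l y - l x)\<^sup>2 \<le> (2 * B l)\<^sup>2" if "y \<in> K" for y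
        using B[OF \<open>l \<in> Ls\<close> that] B[OF \<open>l \<in> Ls\<close> \<open>x \<in> K\<close>]
        by (intro power2_le_iff_abs_le[THEN iffD2]) auto
      then show "C_op mu mus a n (\<lambda>y. (l y - l x)\<^sup>2) x \<le> (a\<^sup>2 + 1) / real n * (2 * B l)\<^sup>2"
        using Ls[OF \<open>l \<in> Ls\<close>] by (intro C_op_second_moment_le[OF that(2,1)]) auto
    qed
    also have "\<dots> = R / real n"
      unfolding R_def by (simp add: sum_distrib_left sum_divide_distrib)
    finally show ?thesis .
  qed
  then show ?thesis by (rule that)
qed

theorem uniform_limit_C_op:
  assumes f: "continuous_on K f"
  shows "uniform_limit K (\<lambda>n. C_op mu mus a n f) f sequentially"
  unfolding uniform_limit_iff
proof (intro allI impI)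
  fix e :: real assume "e > 0"
  then obtain Ls C where "finite Ls" "C \<ge> 0" and Ls: "\<And>l. l \<in> Ls \<Longrightarrow> linear l \<and> continuous_on UNIV l"
    and est: "\<And>x y. x \<in> K \<Longrightarrow> y \<in> K \<Longrightarrow> \<bar>f y - f x\<bar> \<le> e / 2 + C * (\<Sum>l\<in>Ls. (l y - l x)\<^sup>2)"
    using lctvs_korovkin_estimate[OF lctvs compact f, of "e / 2"] by auto
  obtain R where R: "\<And>n x. n \<ge> 1 \<Longrightarrow> x \<in> K \<Longrightarrow>
      C_op mu mus a n (\<lambda>y. \<Sum>l\<in>Ls. (l y - l x)\<^sup>2) x \<le> R / real n"
    using C_op_sum_squares_le[OF \<open>finite Ls\<close> Ls] by blast
  have "(\<lambda>n. C * (R / real n)) \<longlonglongrightarrow> 0"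
    by (rule tendsto_mult_right_zero[OF lim_const_over_n])
  then have "\<forall>\<^sub>F n in sequentially. C * (R / real n) < e / 2"
    by (rule order_tendstoD(2)) (use \<open>e > 0\<close> in simp)
  moreover have "\<forall>\<^sub>F n in sequentially. n \<ge> (1::nat)"
    by (rule eventually_ge_at_top)
  ultimately show "\<forall>\<^sub>F n in sequentially. \<forall>x\<in>K. dist (C_op mu mus a n f x) (f x) < e"
  proof eventually_elim
    case (elim n)
    show ?case
    proof
      fix x assume "x \<in> K"
      have q: "continuous_on K (\<lambda>y. \<Sum>l\<in>Ls. (l y - l x)\<^sup>2)"
        using Ls continuous_on_subset by (intro continuous_intros) blast+
      have "\<bar>C_op mu mus a n f x - f x\<bar> \<le> e / 2 + C * C_op mu mus a n (\<lambda>y. \<Sum>l\<in>Ls. (l y - l x)\<^sup>2) x"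
        using est \<open>x \<in> K\<close> by (intro C_op_deviation_le[OF \<open>x \<in> K\<close> elim(2) f q])
      also have "\<dots> \<le> e / 2 + C * (R / real n)"
        using mult_left_mono[OF R[OF elim(2) \<open>x \<in> K\<close>] \<open>C \<ge> 0\<close>] by simp
      finally show "dist (C_op mu mus a n f x) (f x) < e"
        using elim(1) unfolding dist_real_def by linarith
    qed
  qed
qed

end

theorem theorem3p2:
  fixes K :: "'a::{real_vector,t2_space} set"
    and T :: "('a \<Rightarrow> real) \<Rightarrow> ('a \<Rightarrow> real)"
    and mu :: "'a \<Rightarrow> 'a measure"
    and mus :: "nat \<Rightarrow> 'a measure"
    and a :: real
  assumes "locally_convex_tvs TYPE('a)"
    and "convex K" and "compact K"
    and "markov_operator K T"
    and "\<And>h. continuous_on K h \<Longrightarrow> affine_on K h \<Longrightarrow> \<forall>x\<in>K. T h x = h x"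
    and "\<And>x. x \<in> K \<Longrightarrow> borel_prob_on K (mu x)"
    and "\<And>x f. x \<in> K \<Longrightarrow> continuous_on K f \<Longrightarrow> (\<integral>y. f y \<partial>(mu x)) = T f x"
    and "a \<ge> 0"
    and "\<And>n. n \<ge> 1 \<Longrightarrow> borel_prob_on K (mus n)"
    and "continuous_on K f"
  shows "uniform_limit K (\<lambda>n. C_op mu mus a n f) f sequentially"
proof -
  interpret C_op_setting K mu mus a
  proof
    show "(\<integral>y. l y \<partial>(mu x)) = l x" if "x \<in> K" "linear l" "continuous_on UNIV l" for x and l :: "'a \<Rightarrow> real"
      by (rule integral_linear_eq_if_T_fixes_affine[OF assms(5) assms(7)[OF that(1)] that])
  qed (use assms in auto)
  show ?thesis
    by (rule uniform_limit_C_op[OF assms(10)])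
qed

end
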